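(* Let $m>n\ge1$ be coprime integers, and let $$\mathcal{A}_{\frac{m}{n}}(q)=q\,\mathcal{N}_{\frac{m}{n}}(q)\mathcal{N}_{\frac{n}{m}}(q)+\mathcal{D}_{\frac{m}{n}}(q)\mathcal{D}_{\frac{n}{m}}(q),$$ $$\mathcal{B}_{\frac{m}{n}}(q)=\mathcal{N}_{\frac{m}{n}}(q)\mathcal{D}_{\frac{n}{m}}(q)-\mathcal{D}_{\frac{m}{n}}(q)\mathcal{N}_{\frac{n}{m}}(q),$$ $$\mathcal{C}_{\frac{m}{n}}(q)=q\,\mathcal{N}_{\frac{m}{n}}(q)^2+\mathcal{D}_{\frac{m}{n}}(q)^2.$$ Then (i) $\mathcal{A}_{\frac{m}{n}}$ and $\mathcal{B}_{\frac{m}{n}}$ are self-reciprocal, i.e. $q^{\deg P}P(q^{-1})=P(q)$ for $P\in\{\mathcal{A}_{\frac{m}{n}},\mathcal{B}_{\frac{m}{n}}\}$; (ii) $\mathcal{A}_{\frac{m}{n}},\mathcal{B}_{\frac{m}{n}},\mathcal{C}_{\frac{m}{n}}$ are monic (leading and lowest-degree coefficients equal to $1$) and have positive coefficients.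
   Context: The $q$-deformed rationals: $x\mapsto[x]_q$ is the unique map from $\mathbb{Q}\cup\{\infty\}$ to $\mathbb{Q}(q)\cup\{\infty\}$ satisfying $[0]_q=0$, $[x+1]_q=q[x]_q+1$ and $[-1/x]_q=-1/(q[x]_q)$. For positive rational $x$, $\mathcal{N}_x,\mathcal{D}_x\in\mathbb{Z}[q]$ are the numerator and denominator of $[x]_q$: the polynomials with no common divisor in $\mathbb{Z}[q]$ other than $\pm1$ and with positive leading coefficients such that $[x]_q=\mathcal{N}_x/\mathcal{D}_x$. *)

theory Defs
  imports "HOL-Computational_Algebra.Polynomial" "HOL-Computational_Algebra.Fraction_Field"
    Complex_Main
begin

text \<open>Q(q) is the fraction field of Z[q]; the extra point infinity is modelled by None.
  Likewise Q united with infinity is rat option (None = infinity).\<close>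

type_synonym qfun = "int poly fract"

definition qvar :: qfun where "qvar = Fract [:0, 1:] 1"

definition shift1 :: "rat option \<Rightarrow> rat option" where
  "shift1 v = map_option (\<lambda>x. x + 1) v"

definition neginv :: "rat option \<Rightarrow> rat option" where
  "neginv v = (case v of None \<Rightarrow> Some 0
                | Some x \<Rightarrow> if x = 0 then None else Some (- 1 / x))"

definition qshift1 :: "qfun option \<Rightarrow> qfun option" where
  "qshift1 v = map_option (\<lambda>y. qvar * y + 1) v"

definition qneginv :: "qfun option \<Rightarrow> qfun option" where
  "qneginv v = (case v of None \<Rightarrow> Some 0
                 | Some y \<Rightarrow> if y = 0 then None else Some (- 1 / (qvar * y)))"

definition is_qdeformation :: "(rat option \<Rightarrow> qfun option) \<Rightarrow> bool" where
  "is_qdeformation f \<longleftrightarrow>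
     f (Some 0) = Some 0 \<and>
     (\<forall>x. f (shift1 x) = qshift1 (f x)) \<and>
     (\<forall>x. f (neginv x) = qneginv (f x))"

definition qdeform :: "rat option \<Rightarrow> qfun option" where
  "qdeform = (THE f. is_qdeformation f)"

definition qnumden :: "rat \<Rightarrow> int poly \<times> int poly" where
  "qnumden x = (THE (N, D). coprime N D \<and> lead_coeff N > 0 \<and> lead_coeff D > 0 \<and>
                   qdeform (Some x) = Some (Fract N D))"

definition qN :: "rat \<Rightarrow> int poly" where "qN x = fst (qnumden x)"
definition qD :: "rat \<Rightarrow> int poly" where "qD x = snd (qnumden x)"

text \<open>Self-reciprocal: q^(deg P) P(1/q) = P(q) (checked as an identity of functions
  on nonzero complex numbers, equivalent to the identity of rational functions).\<close>
definition self_reciprocal :: "int poly \<Rightarrow> bool" where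
  "self_reciprocal P \<longleftrightarrow>
     (\<forall>z::complex. z \<noteq> 0 \<longrightarrow>
        z ^ degree P * poly (map_poly of_int P) (inverse z) = poly (map_poly of_int P) z)"

definition monic_both :: "int poly \<Rightarrow> bool" where
  "monic_both P \<longleftrightarrow> lead_coeff P = 1 \<and> coeff P (LEAST i. coeff P i \<noteq> 0) = 1"

definition positive_coeffs :: "int poly \<Rightarrow> bool" where
  "positive_coeffs P \<longleftrightarrow> (\<forall>i \<le> degree P. coeff P i > 0)"

definition qA :: "rat \<Rightarrow> int poly" where
  "qA x = [:0, 1:] * qN x * qN (1 / x) + qD x * qD (1 / x)"
definition qB :: "rat \<Rightarrow> int poly" where
  "qB x = qN x * qD (1 / x) - qD x * qN (1 / x)"
definition qC :: "rat \<Rightarrow> int poly" where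
  "qC x = [:0, 1:] * qN x ^ 2 + qD x ^ 2"

end

theory Submission
  imports Defs "HOL-Computational_Algebra.Polynomial_Factorial"
begin

text \<open>
  The pairs (N, D) for m/n are produced by the subtractive Euclidean algorithm from (1, 1),
  using [x + 1]_q = q [x]_q + 1 and [x/(1 + x)]_q = q [x]_q / (1 + q [x]_q). Along the way the
  pairs of x and 1/x stay mirror images of each other in a common degree k:
  N_x(q) = q^k D_(1/x)(1/q) and N_(1/x)(q) = q^k D_x(1/q), while the denominators have constant
  term 1 and no zero coefficient up to their degree. The mirror symmetry makes A and B palindromic,
  hence self-reciprocal with leading coefficient equal to the constant term 1. Positivity holds
  because each of A, B, C is a sum of products with nonnegative coefficients whose supports are
  intervals that together cover all degrees.
\<close>

section \<open>Reciprocal polynomials\<close>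

definition reciprocal :: "nat \<Rightarrow> 'a::comm_semiring_1 poly \<Rightarrow> 'a poly" where
  "reciprocal k p = monom 1 (k - degree p) * reflect_poly p"

lemma coeff_reciprocal:
  assumes "degree p \<le> k"
  shows "coeff (reciprocal k p) i = (if i \<le> k then coeff p (k - i) else 0)"
  using assms by (auto simp: reciprocal_def coeff_monom_mult coeff_reflect_poly coeff_eq_0)

lemma degree_reciprocal_le: "degree p \<le> k \<Longrightarrow> degree (reciprocal k p) \<le> k"
  by (rule degree_le) (simp add: coeff_reciprocal)

lemma reciprocal_reciprocal: "degree p \<le> k \<Longrightarrow> reciprocal k (reciprocal k p) = p"
  by (rule poly_eqI) (simp add: coeff_reciprocal degree_reciprocal_le coeff_eq_0)

lemma reciprocal_add:
  "degree p \<le> k \<Longrightarrow> degree q \<le> k \<Longrightarrow> reciprocal k (p + q) = reciprocal k p + reciprocal k q"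
  by (rule poly_eqI) (simp add: coeff_reciprocal degree_add_le)

lemma reciprocal_diff:
  fixes p q :: "'a::comm_ring_1 poly"
  assumes "degree p \<le> k" "degree q \<le> k"
  shows "reciprocal k (p - q) = reciprocal k p - reciprocal k q"
  by (rule poly_eqI) (simp add: assms coeff_reciprocal degree_diff_le)

lemma reciprocal_mult:
  fixes p q :: "'a::{comm_semiring_1,semiring_no_zero_divisors} poly"
  assumes "degree p \<le> a" "degree q \<le> b"
  shows "reciprocal (a + b) (p * q) = reciprocal a p * reciprocal b q"
proof (cases "p = 0 \<or> q = 0")
  case False
  then have "a + b - degree (p * q) = (a - degree p) + (b - degree q)"
    using assms by (simp add: degree_mult_eq)
  then show ?thesis
    by (simp add: reciprocal_def reflect_poly_mult mult_monom ac_simps)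
qed (auto simp: reciprocal_def)

lemma reflect_poly_eq_reciprocal: "reflect_poly p = reciprocal (degree p) p"
  by (simp add: reciprocal_def)

lemma reciprocal_Suc:
  "degree p \<le> k \<Longrightarrow> reciprocal (Suc k) p = pCons 0 (reciprocal k p)"
  by (rule poly_eqI) (auto simp: coeff_reciprocal coeff_pCons coeff_eq_0 Suc_diff_le split: nat.split)

lemma reciprocal_Suc_pCons_0:
  "degree p \<le> k \<Longrightarrow> reciprocal (Suc k) (pCons 0 p) = reciprocal k p"
  by (rule poly_eqI)
    (auto simp: coeff_reciprocal coeff_pCons Suc_diff_le order.trans[OF degree_pCons_le] split: nat.split)

lemma
  fixes p :: "'a::comm_semiring_1 poly"
  assumes "degree p \<le> k" "reciprocal k p = p" "coeff p 0 \<noteq> 0"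
  shows degree_reciprocal_fixed: "degree p = k"
    and lead_coeff_reciprocal_fixed: "lead_coeff p = coeff p 0"
proof -
  have top: "coeff p k = coeff p 0"
    using coeff_reciprocal[OF assms(1), of k] assms(2) by simp
  show deg: "degree p = k"
    using le_degree[of p k] top assms by simp
  show "lead_coeff p = coeff p 0" using top deg by simp
qed

section \<open>Positive coefficients\<close>

definition coeffs_pos_on :: "'a::{zero,ord} poly \<Rightarrow> nat set \<Rightarrow> bool" where
  "coeffs_pos_on p S \<longleftrightarrow> (\<forall>i. 0 \<le> coeff p i) \<and> (\<forall>i\<in>S. 0 < coeff p i)"

lemma coeffs_pos_on_subset: "coeffs_pos_on p S \<Longrightarrow> T \<subseteq> S \<Longrightarrow> coeffs_pos_on p T"
  by (auto simp: coeffs_pos_on_def)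

lemma coeffs_pos_on_add:
  fixes p q :: "'a::linordered_semidom poly"
  shows "coeffs_pos_on p S \<Longrightarrow> coeffs_pos_on q T \<Longrightarrow> coeffs_pos_on (p + q) (S \<union> T)"
  by (auto simp: coeffs_pos_on_def add_pos_nonneg add_nonneg_pos)

lemma coeffs_pos_on_mult:
  fixes p q :: "'a::linordered_semidom poly"
  assumes p: "coeffs_pos_on p {a..b}" and q: "coeffs_pos_on q {c..d}" and "a \<le> b" "c \<le> d"
  shows "coeffs_pos_on (p * q) {a + c..b + d}"
  unfolding coeffs_pos_on_def
proof (intro conjI ballI allI)
  have nonneg: "0 \<le> coeff p j * coeff q (i - j)" for i j
    using p q by (simp add: coeffs_pos_on_def)
  show "0 \<le> coeff (p * q) i" for i
    by (simp add: coeff_mult sum_nonneg nonneg)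
  fix i assume i: "i \<in> {a + c..b + d}"
  define j where "j = max a (i - d)"
  have j: "j \<in> {a..b}" "i - j \<in> {c..d}" "j \<le> i"
    using i \<open>a \<le> b\<close> \<open>c \<le> d\<close> by (auto simp: j_def)
  have "0 < coeff p j * coeff q (i - j)"
    using p q j by (simp add: coeffs_pos_on_def)
  also have "\<dots> \<le> (\<Sum>l\<le>i. coeff p l * coeff q (i - l))"
    by (rule member_le_sum) (use j nonneg in auto)
  finally show "0 < coeff (p * q) i"
    by (simp add: coeff_mult)
qed

lemma coeffs_pos_on_pCons_0:
  fixes p :: "'a::linordered_semidom poly"
  shows "coeffs_pos_on p {a..b} \<Longrightarrow> coeffs_pos_on (pCons 0 p) {Suc a..Suc b}"
  by (auto simp: coeffs_pos_on_def coeff_pCons split: nat.split)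

lemma coeffs_pos_on_reciprocal:
  fixes p :: "'a::linordered_semidom poly"
  assumes "degree p \<le> k" "a \<le> b" "b \<le> k" "coeffs_pos_on p {a..b}"
  shows "coeffs_pos_on (reciprocal k p) {k - b..k - a}"
proof -
  have "k - i \<in> {a..b}" if "i \<in> {k - b..k - a}" for i
    using that \<open>a \<le> b\<close> \<open>b \<le> k\<close> by auto
  then show ?thesis
    using assms by (auto simp: coeffs_pos_on_def coeff_reciprocal)
qed

lemma positive_coeffsI: "degree p \<le> d \<Longrightarrow> coeffs_pos_on p {0..d} \<Longrightarrow> positive_coeffs p"
  by (auto simp: positive_coeffs_def coeffs_pos_on_def)

lemma monic_bothI: "degree p \<le> d \<Longrightarrow> coeff p d = 1 \<Longrightarrow> coeff p 0 = 1 \<Longrightarrow> monic_both p"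
  using le_degree[of p d] by (simp add: monic_both_def Least_eq_0 le_antisym)

lemma self_reciprocalI:
  assumes "reflect_poly P = P"
  shows "self_reciprocal P"
  unfolding self_reciprocal_def
proof (intro allI impI)
  fix z :: complex assume "z \<noteq> 0"
  let ?Q = "map_poly of_int P :: complex poly"
  have deg: "degree ?Q = degree P"
    by (simp add: degree_map_poly)
  have "reflect_poly ?Q = map_poly of_int (reflect_poly P)"
    by (rule poly_eqI) (simp add: coeff_reflect_poly coeff_map_poly deg)
  then have "reflect_poly ?Q = ?Q"
    using assms by simp
  then show "z ^ degree P * poly ?Q (inverse z) = poly ?Q z"
    using poly_reflect_poly_nz[OF \<open>z \<noteq> 0\<close>, of ?Q] deg by simp
qed

lemma reciprocal_fixed_props:
  assumes "degree P \<le> d" "reciprocal d P = P" "coeff P 0 = 1" "coeffs_pos_on P {0..d}"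
  shows "self_reciprocal P" "monic_both P" "positive_coeffs P"
proof -
  have "degree P = d"
    using assms by (simp add: degree_reciprocal_fixed)
  then show "self_reciprocal P"
    using assms by (intro self_reciprocalI) (simp add: reflect_poly_eq_reciprocal)
  show "monic_both P"
    using assms \<open>degree P = d\<close> lead_coeff_reciprocal_fixed[of P d] by (intro monic_bothI[of P d]) auto
  show "positive_coeffs P"
    using assms by (intro positive_coeffsI)
qed

section \<open>Numerators and denominators of [m/n]_q and [n/m]_q\<close>

text \<open>
  (N, D) and (N', D') will be the numerator and denominator of [x]_q and [1/x]_q. The last
  conjunct is what makes the coefficient supports of the summands of A, B and C overlap.
\<close>

fun dual_pairs :: "nat \<Rightarrow> int poly \<times> int poly \<Rightarrow> int poly \<times> int poly \<Rightarrow> bool" where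
  "dual_pairs k (N, D) (N', D') \<longleftrightarrow>
     degree D \<le> k \<and> degree D' \<le> k \<and> N = reciprocal k D' \<and> N' = reciprocal k D \<and>
     coeff D 0 = 1 \<and> coeff D' 0 = 1 \<and>
     coeffs_pos_on D {0..degree D} \<and> coeffs_pos_on D' {0..degree D'} \<and>
     k \<le> degree D + degree D'"

declare dual_pairs.simps [simp del]

lemma dual_pairs_commute: "dual_pairs k p p' \<Longrightarrow> dual_pairs k p' p"
  by (cases p; cases p') (auto simp: dual_pairs.simps)

lemma dual_pairs_numerator:
  assumes "dual_pairs k (N, D) (N', D')"
  shows "degree N \<le> k" "coeff N k = 1" "coeffs_pos_on N {k - degree D'..k}"
  using assms degree_reciprocal_le[of D' k] coeff_reciprocal[of D' k k]
    coeffs_pos_on_reciprocal[of D' k 0 "degree D'"] by (auto simp: dual_pairs.simps)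

lemma dual_pairs_denominator:
  assumes "dual_pairs k (N, D) (N', D')"
  shows "degree D \<le> k" "coeff D 0 = 1" "coeffs_pos_on D {0..degree D}" "k \<le> degree D + degree D'"
  using assms by (auto simp: dual_pairs.simps)

text \<open>
  From numerator and denominator of y = [x]_q to those of q y + 1 = [x + 1]_q and of
  q y / (1 + q y) = [x/(1 + x)]_q.
\<close>

fun shift_nd :: "int poly \<times> int poly \<Rightarrow> int poly \<times> int poly" where
  "shift_nd (N, D) = (pCons 0 N + D, D)"

fun coshift_nd :: "int poly \<times> int poly \<Rightarrow> int poly \<times> int poly" where
  "coshift_nd (N, D) = (pCons 0 N, D + pCons 0 N)"

lemma dual_pairs_shift:
  assumes "dual_pairs k p p'"
  shows "dual_pairs (Suc k) (shift_nd p) (coshift_nd p')"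
proof -
  obtain N D N' D' where p: "p = (N, D)" and p': "p' = (N', D')" by fastforce
  have N: "N = reciprocal k D'" and N': "N' = reciprocal k D"
    using assms by (simp_all add: p p' dual_pairs.simps)
  note num' = dual_pairs_numerator[OF dual_pairs_commute[OF assms[unfolded p p']]]
  note den = dual_pairs_denominator[OF assms[unfolded p p']]
  note den' = dual_pairs_denominator[OF dual_pairs_commute[OF assms[unfolded p p']]]
  define D'' where "D'' = D' + pCons 0 N'"
  have "degree (pCons 0 N') \<le> Suc k"
    using num'(1) by (simp add: order.trans[OF degree_pCons_le])
  then have "degree D'' \<le> Suc k"
    using den'(1) by (simp add: D''_def degree_add_le)
  have "coeffs_pos_on D'' ({0..degree D'} \<union> {Suc (k - degree D)..Suc k})"
    unfolding D''_def by (intro coeffs_pos_on_add coeffs_pos_on_pCons_0 den' num')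
  then have pos: "coeffs_pos_on D'' {0..Suc k}"
    by (rule coeffs_pos_on_subset) (use den(4) in auto)
  then have "0 < coeff D'' (Suc k)"
    by (simp add: coeffs_pos_on_def)
  with \<open>degree D'' \<le> Suc k\<close> have deg: "degree D'' = Suc k"
    by (simp add: le_antisym le_degree)
  have "reciprocal (Suc k) D'' = pCons 0 N + D"
    using den(1) den'(1) num'(1)
    by (simp add: N N' D''_def reciprocal_reciprocal reciprocal_add reciprocal_Suc reciprocal_Suc_pCons_0)
  moreover have "reciprocal (Suc k) D = pCons 0 N'"
    using den(1) by (simp add: N' reciprocal_Suc)
  moreover have "coeff D'' 0 = 1"
    using den'(2) by (simp add: D''_def)
  ultimately show ?thesis
    using den den' deg pos by (simp add: p p' dual_pairs.simps flip: D''_def)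
qed

lemma dual_pairs_qA:
  assumes "dual_pairs k (N, D) (N', D')"
  defines "A \<equiv> pCons 0 (N * N') + D * D'"
  shows "degree A \<le> 2 * k + 1" "reciprocal (2 * k + 1) A = A" "coeff A 0 = 1"
    "coeffs_pos_on A {0..2 * k + 1}"
proof -
  have N: "N = reciprocal k D'" and N': "N' = reciprocal k D"
    using assms(1) by (simp_all add: dual_pairs.simps)
  note num = dual_pairs_numerator[OF assms(1)]
  note num' = dual_pairs_numerator[OF dual_pairs_commute[OF assms(1)]]
  note den = dual_pairs_denominator[OF assms(1)]
  note den' = dual_pairs_denominator[OF dual_pairs_commute[OF assms(1)]]
  have deg: "degree (N * N') \<le> k + k" "degree (D * D') \<le> k + k"
    using num(1) num'(1) den(1) den'(1) by (simp_all add: order.trans[OF degree_mult_le] add_mono)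
  then show "degree A \<le> 2 * k + 1"
    by (simp add: A_def degree_add_le order.trans[OF degree_pCons_le])
  have "reciprocal (Suc (k + k)) A = reciprocal (k + k) (N * N') + pCons 0 (reciprocal (k + k) (D * D'))"
    using deg by (simp add: A_def reciprocal_add reciprocal_Suc reciprocal_Suc_pCons_0
        order.trans[OF degree_pCons_le])
  also have "\<dots> = A"
    using num(1) num'(1) den(1) den'(1)
    by (simp add: A_def reciprocal_mult N N' reciprocal_reciprocal ac_simps)
  finally show "reciprocal (2 * k + 1) A = A"
    by (simp add: mult_2)
  show "coeff A 0 = 1"
    using den(2) den'(2) by (simp add: A_def coeff_mult_0)
  have "coeffs_pos_on (D * D') {0..degree D + degree D'}"
    using coeffs_pos_on_mult[OF den(3) den'(3)] by simp
  moreover have "coeffs_pos_on (pCons 0 (N * N')) {Suc (k - degree D' + (k - degree D))..Suc (k + k)}"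
    by (intro coeffs_pos_on_pCons_0 coeffs_pos_on_mult num num') simp_all
  ultimately have "coeffs_pos_on A
      ({Suc (k - degree D' + (k - degree D))..Suc (k + k)} \<union> {0..degree D + degree D'})"
    unfolding A_def by (rule coeffs_pos_on_add[rotated])
  then show "coeffs_pos_on A {0..2 * k + 1}"
    by (rule coeffs_pos_on_subset) (use den(4) in auto)
qed

lemma dual_pairs_qB_reciprocal:
  assumes "dual_pairs k (N, D) (N', D')"
  defines "B \<equiv> N * D' - D * N'"
  shows "degree B \<le> 2 * k" "reciprocal (2 * k) B = B"
proof -
  have N: "N = reciprocal k D'" and N': "N' = reciprocal k D"
    using assms(1) by (simp_all add: dual_pairs.simps)
  have deg: "degree D \<le> k" "degree D' \<le> k" "degree N \<le> k" "degree N' \<le> k"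
    using dual_pairs_denominator(1)[OF assms(1)] dual_pairs_numerator(1)[OF assms(1)]
      dual_pairs_denominator(1)[OF dual_pairs_commute[OF assms(1)]]
      dual_pairs_numerator(1)[OF dual_pairs_commute[OF assms(1)]] by simp_all
  then have "degree (N * D') \<le> k + k" "degree (D * N') \<le> k + k"
    by (simp_all add: order.trans[OF degree_mult_le] add_mono)
  then show "degree B \<le> 2 * k"
    by (simp add: B_def mult_2 order.trans[OF degree_diff_le])
  have "reciprocal (k + k) B = B"
    using deg \<open>degree (N * D') \<le> k + k\<close> \<open>degree (D * N') \<le> k + k\<close>
    by (simp add: B_def reciprocal_diff reciprocal_mult N N' reciprocal_reciprocal ac_simps)
  then show "reciprocal (2 * k) B = B"
    by (simp add: mult_2)
qed

text \<open>
  For the pairs of x + 1 and 1/(x + 1), i.e. after one step from (N, D) and (N', D'), B expands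
  into a sum of products of polynomials with nonnegative coefficients.
\<close>

lemma dual_pairs_qB_coeffs:
  assumes "dual_pairs k (N, D) (N', D')"
  defines "B \<equiv> (pCons 0 N + D) * (D' + pCons 0 N') - D * pCons 0 N'"
  shows "coeff B 0 = 1" "coeffs_pos_on B {0..2 * Suc k}"
proof -
  note num = dual_pairs_numerator[OF assms(1)]
  note num' = dual_pairs_numerator[OF dual_pairs_commute[OF assms(1)]]
  note den = dual_pairs_denominator[OF assms(1)]
  note den' = dual_pairs_denominator[OF dual_pairs_commute[OF assms(1)]]
  have B: "B = pCons 0 (N * D') + pCons 0 (pCons 0 (N * N')) + D * D'"
    by (simp add: B_def algebra_simps)
  then show "coeff B 0 = 1"
    using den(2) den'(2) by (simp add: coeff_mult_0)
  have "coeffs_pos_on (D * D') {0..degree D + degree D'}"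
    using coeffs_pos_on_mult[OF den(3) den'(3)] by simp
  moreover have "coeffs_pos_on (pCons 0 (N * D')) {Suc (k - degree D')..Suc (k + degree D')}"
    using coeffs_pos_on_pCons_0[OF coeffs_pos_on_mult[OF num(3) den'(3)]] by simp
  moreover have "coeffs_pos_on (pCons 0 (pCons 0 (N * N')))
      {Suc (Suc (k - degree D' + (k - degree D)))..Suc (Suc (k + k))}"
    by (intro coeffs_pos_on_pCons_0 coeffs_pos_on_mult num num') simp_all
  ultimately have "coeffs_pos_on B ({Suc (k - degree D')..Suc (k + degree D')} \<union>
      {Suc (Suc (k - degree D' + (k - degree D)))..Suc (Suc (k + k))} \<union> {0..degree D + degree D'})"
    unfolding B by (intro coeffs_pos_on_add)
  then show "coeffs_pos_on B {0..2 * Suc k}"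
    by (rule coeffs_pos_on_subset) (use den(1,4) den'(1) in auto)
qed

lemma dual_pairs_qC:
  assumes "dual_pairs k (N, D) (N', D')"
  defines "C \<equiv> pCons 0 (N * N) + D * D"
  shows "monic_both C" "positive_coeffs C"
proof -
  note num = dual_pairs_numerator[OF assms(1)]
  note den = dual_pairs_denominator[OF assms(1)]
  have deg: "degree (N * N) \<le> k + k" "degree (D * D) \<le> k + k"
    using num(1) den(1) by (simp_all add: order.trans[OF degree_mult_le] add_mono)
  then have "degree C \<le> 2 * k + 1"
    by (simp add: C_def degree_add_le order.trans[OF degree_pCons_le])
  moreover have "coeff C (2 * k + 1) = 1"
  proof -
    have "degree N = k"
      using num(1,2) le_degree[of N k] by simp
    then have "coeff (N * N) (k + k) = 1"
      using coeff_mult_degree_sum[of N N] num(2) by simp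
    then show ?thesis
      using deg(2) by (simp add: C_def mult_2 coeff_eq_0)
  qed
  moreover have "coeff C 0 = 1"
    using den(2) by (simp add: C_def coeff_mult_0)
  ultimately show "monic_both C"
    by (rule monic_bothI)
  have "coeffs_pos_on (D * D) {0..degree D + degree D}"
    using coeffs_pos_on_mult[OF den(3) den(3)] by simp
  moreover have "coeffs_pos_on (pCons 0 (N * N)) {Suc (k - degree D' + (k - degree D'))..Suc (k + k)}"
    by (intro coeffs_pos_on_pCons_0 coeffs_pos_on_mult num) simp_all
  ultimately have "coeffs_pos_on C
      ({Suc (k - degree D' + (k - degree D'))..Suc (k + k)} \<union> {0..degree D + degree D})"
    unfolding C_def by (rule coeffs_pos_on_add[rotated])
  then have "coeffs_pos_on C {0..2 * k + 1}"
    by (rule coeffs_pos_on_subset) (use den(4) in auto)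
  with \<open>degree C \<le> 2 * k + 1\<close> show "positive_coeffs C"
    by (rule positive_coeffsI)
qed

lemma positive_pair_induct [consumes 2, case_names diagonal add_left add_right]:
  fixes m n :: nat
  assumes "0 < m" "0 < n"
    and diagonal: "\<And>m. 0 < m \<Longrightarrow> P m m"
    and add_left: "\<And>m n. 0 < m \<Longrightarrow> 0 < n \<Longrightarrow> P m n \<Longrightarrow> P (m + n) n"
    and add_right: "\<And>m n. 0 < m \<Longrightarrow> 0 < n \<Longrightarrow> P m n \<Longrightarrow> P m (m + n)"
  shows "P m n"
  using assms(1,2)
proof (induction "m + n" arbitrary: m n rule: less_induct)
  case less
  consider "m = n" | "n < m" | "m < n" by linarith
  then show ?case
  proof cases
    case 1
    then show ?thesis using less.prems diagonal by simp
  next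
    case 2
    then show ?thesis using less add_left[of "m - n" n] by simp
  next
    case 3
    then show ?thesis using less add_right[of m "n - m"] by simp
  qed
qed

text \<open>The value (1, 1) for m = 0 or n = 0 is junk.\<close>

function qnumden_nat :: "nat \<Rightarrow> nat \<Rightarrow> int poly \<times> int poly" where
  "qnumden_nat m n =
     (if m = 0 \<or> n = 0 \<or> m = n then (1, 1)
      else if n < m then shift_nd (qnumden_nat (m - n) n)
      else coshift_nd (qnumden_nat m (n - m)))"
  by auto
termination by (relation "measure (\<lambda>(m, n). m + n)") auto

declare qnumden_nat.simps [simp del]

lemma qnumden_nat_diagonal: "qnumden_nat m m = (1, 1)"
  by (simp add: qnumden_nat.simps)

lemma qnumden_nat_add_left:
  "0 < m \<Longrightarrow> 0 < n \<Longrightarrow> qnumden_nat (m + n) n = shift_nd (qnumden_nat m n)"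
  by (simp add: qnumden_nat.simps)

lemma qnumden_nat_add_right:
  "0 < m \<Longrightarrow> 0 < n \<Longrightarrow> qnumden_nat m (m + n) = coshift_nd (qnumden_nat m n)"
  by (simp add: qnumden_nat.simps)

lemma dual_pairs_qnumden_nat:
  assumes "0 < m" "0 < n"
  shows "\<exists>k. dual_pairs k (qnumden_nat m n) (qnumden_nat n m)"
  using assms
proof (induction m n rule: positive_pair_induct)
  case (diagonal m)
  have "dual_pairs 0 (1, 1) (1, 1)"
    by (simp add: dual_pairs.simps reciprocal_def coeffs_pos_on_def)
  then show ?case by (auto simp: qnumden_nat_diagonal)
next
  case (add_left m n)
  then have "qnumden_nat (m + n) n = shift_nd (qnumden_nat m n)"
    and "qnumden_nat n (m + n) = coshift_nd (qnumden_nat n m)"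
    using qnumden_nat_add_left qnumden_nat_add_right[of n m] by (simp_all add: add.commute)
  then show ?case
    using add_left.IH dual_pairs_shift by metis
next
  case (add_right m n)
  then have "qnumden_nat m (m + n) = coshift_nd (qnumden_nat m n)"
    and "qnumden_nat (m + n) m = shift_nd (qnumden_nat n m)"
    using qnumden_nat_add_right qnumden_nat_add_left[of n m] by (simp_all add: add.commute)
  then show ?case
    using add_right.IH dual_pairs_shift dual_pairs_commute by metis
qed

lemma qnumden_nat_coeffs:
  assumes "0 < m" "0 < n" "qnumden_nat m n = (N, D)"
  shows "lead_coeff N = 1" "0 < lead_coeff D" "coeff D 0 = 1"
proof -
  obtain N' D' where "qnumden_nat n m = (N', D')" by fastforce
  then obtain k where k: "dual_pairs k (N, D) (N', D')"
    using dual_pairs_qnumden_nat[OF assms(1,2)] unfolding assms(3) by metis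
  show "lead_coeff N = 1"
    using dual_pairs_numerator(1,2)[OF k] le_degree[of N k] by simp
  show "0 < lead_coeff D"
    using dual_pairs_denominator(3)[OF k] by (simp add: coeffs_pos_on_def)
  show "coeff D 0 = 1"
    using dual_pairs_denominator(2)[OF k] .
qed

lemma coprime_shift_coshift_nd:
  fixes N D :: "int poly"
  assumes "coprime N D" "coeff D 0 \<noteq> 0"
  shows "case_prod coprime (shift_nd (N, D))" "case_prod coprime (coshift_nd (N, D))"
proof -
  have "coprime [:0, 1:] D"
    by (rule prime_elem_imp_coprime[OF prime_elem_linear_poly])
      (use assms(2) in \<open>simp_all add: dvd_iff_poly_eq_0 poly_0_coeff_0\<close>)
  moreover have "pCons 0 N = [:0, 1:] * N"
    by simp
  ultimately have "coprime (pCons 0 N) D"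
    using assms(1) by (simp only: coprime_mult_left_iff)
  then show "case_prod coprime (shift_nd (N, D))" "case_prod coprime (coshift_nd (N, D))"
    by (simp_all add: coprime_iff_gcd_eq_1 add.commute[of D])
qed

lemma coprime_qnumden_nat:
  assumes "0 < m" "0 < n"
  shows "case_prod coprime (qnumden_nat m n)"
  using assms
proof (induction m n rule: positive_pair_induct)
  case (diagonal m)
  then show ?case by (simp add: qnumden_nat_diagonal)
next
  case (add_left m n)
  obtain N D where "qnumden_nat m n = (N, D)" by fastforce
  then show ?case
    using add_left coprime_shift_coshift_nd(1) qnumden_nat_coeffs(3)
    by (simp add: qnumden_nat_add_left)
next
  case (add_right m n)
  obtain N D where "qnumden_nat m n = (N, D)" by fastforce
  then show ?case
    using add_right coprime_shift_coshift_nd(2) qnumden_nat_coeffs(3)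
    by (simp add: qnumden_nat_add_right)
qed

section \<open>An explicit q-deformation\<close>

lemma quotient_of_nat_div:
  assumes "coprime m n" "0 < n"
  shows "quotient_of (of_nat m / of_nat n :: rat) = (int m, int n)"
proof -
  have "(of_nat m / of_nat n :: rat) = Rat.Fract (int m) (int n)"
    by (simp add: Fract_of_int_quotient)
  then show ?thesis
    using assms by (simp add: quotient_of_Fract)
qed

lemma positive_rat_cases:
  assumes "0 < (x :: rat)"
  obtains m n where "0 < m" "0 < n" "coprime m n" "x = of_nat m / of_nat n"
proof -
  obtain a b where q: "quotient_of x = (a, b)" by fastforce
  have "0 < b" "coprime a b" "x = of_int a / of_int b"
    using quotient_of_denom_pos[OF q] quotient_of_coprime[OF q] quotient_of_div[OF q] .
  moreover from this have "0 < a"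
    using assms by (simp add: zero_less_divide_iff)
  ultimately show ?thesis
    using that[of "nat a" "nat b"] by (simp add: coprime_int_iff[symmetric])
qed

definition qdeform_pos :: "rat \<Rightarrow> qfun" where
  "qdeform_pos x = (case quotient_of x of (a, b) \<Rightarrow> case_prod Fract (qnumden_nat (nat a) (nat b)))"

lemma qdeform_pos_of_nat:
  "coprime m n \<Longrightarrow> 0 < n \<Longrightarrow> qdeform_pos (of_nat m / of_nat n) = case_prod Fract (qnumden_nat m n)"
  by (simp add: qdeform_pos_def quotient_of_nat_div)

lemma Fract_shift: "D \<noteq> 0 \<Longrightarrow> Fract (pCons 0 N + D) D = qvar * Fract N D + 1"
  by (simp add: qvar_def One_fract_def)

lemma Fract_coshift:
  assumes "D \<noteq> 0" "D + pCons 0 N \<noteq> 0"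
  shows "Fract (pCons 0 N) (D + pCons 0 N) = qvar * Fract N D / (1 + qvar * Fract N D)"
proof -
  have "qvar * Fract N D / (1 + qvar * Fract N D) = Fract (pCons 0 N) D / Fract (D + pCons 0 N) D"
    using assms by (simp add: qvar_def One_fract_def add.commute)
  also have "\<dots> = Fract (pCons 0 N) (D + pCons 0 N)"
    using assms by (simp add: eq_fract ac_simps)
  finally show ?thesis by simp
qed

lemma
  assumes "0 < x"
  shows qdeform_pos_nonzero: "qdeform_pos x \<noteq> 0"
    and qdeform_pos_shift: "qdeform_pos (x + 1) = qvar * qdeform_pos x + 1"
    and qdeform_pos_coshift: "qdeform_pos (x / (1 + x)) = qvar * qdeform_pos x / (1 + qvar * qdeform_pos x)"
proof -
  obtain m n where mn: "0 < m" "0 < n" "coprime m n" and x: "x = of_nat m / of_nat n"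
    using positive_rat_cases[OF assms] .
  obtain N D where ND: "qnumden_nat m n = (N, D)" by fastforce
  have "coprime (m + n) n" "coprime m (m + n)"
    using mn(3) by (simp_all add: coprime_iff_gcd_eq_1)
  have "N \<noteq> 0" "D \<noteq> 0"
    using qnumden_nat_coeffs(1,2)[OF mn(1,2) ND] by auto
  then show "qdeform_pos x \<noteq> 0"
    using mn by (simp add: x qdeform_pos_of_nat ND eq_fract Zero_fract_def)
  have "x + 1 = of_nat (m + n) / of_nat n"
    using mn by (simp add: x field_simps)
  then have "qdeform_pos (x + 1) = case_prod Fract (qnumden_nat (m + n) n)"
    using \<open>coprime (m + n) n\<close> mn(2) by (simp only: qdeform_pos_of_nat)
  then show "qdeform_pos (x + 1) = qvar * qdeform_pos x + 1"
    using mn \<open>D \<noteq> 0\<close> by (simp add: x qdeform_pos_of_nat qnumden_nat_add_left ND Fract_shift)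
  have "x / (1 + x) = of_nat m / of_nat (m + n)"
    using mn by (simp add: x field_simps)
  then have "qdeform_pos (x / (1 + x)) = case_prod Fract (qnumden_nat m (m + n))"
    using \<open>coprime m (m + n)\<close> mn(2) by (simp only: qdeform_pos_of_nat add_pos_pos)
  moreover have "coeff (D + pCons 0 N) 0 = 1"
    using qnumden_nat_coeffs(3)[OF mn(1,2) ND] by simp
  then have "D + pCons 0 N \<noteq> 0"
    by (metis coeff_0 zero_neq_one)
  ultimately show "qdeform_pos (x / (1 + x)) = qvar * qdeform_pos x / (1 + qvar * qdeform_pos x)"
    using mn \<open>D \<noteq> 0\<close> by (simp add: x qdeform_pos_of_nat qnumden_nat_add_right ND Fract_coshift)
qed

lemma one_plus_qvar_qdeform_pos_nonzero: "0 < x \<Longrightarrow> 1 + qvar * qdeform_pos x \<noteq> 0"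
  using qdeform_pos_coshift[of x] qdeform_pos_nonzero[of "x / (1 + x)"] by auto

lemma qdeform_pos_one: "qdeform_pos 1 = 1"
  using qdeform_pos_of_nat[of 1 1] by (simp add: qnumden_nat_diagonal One_fract_def)

lemma qvar_nonzero: "qvar \<noteq> 0"
  by (simp add: qvar_def eq_fract Zero_fract_def)

text \<open>The value at negative x is forced by [-1/x]_q = -1/(q [x]_q).\<close>

definition qdeform_rat :: "rat \<Rightarrow> qfun" where
  "qdeform_rat x =
     (if 0 < x then qdeform_pos x else if x = 0 then 0 else - 1 / (qvar * qdeform_pos (- 1 / x)))"

lemma qdeform_rat_eq_0_iff: "qdeform_rat x = 0 \<longleftrightarrow> x = 0"
  using qdeform_pos_nonzero[of x] qdeform_pos_nonzero[of "- 1 / x"] qvar_nonzero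
  by (auto simp: qdeform_rat_def divide_less_0_iff)

lemma qdeform_rat_neginv: "x \<noteq> 0 \<Longrightarrow> qdeform_rat (- 1 / x) = - 1 / (qvar * qdeform_rat x)"
  using qdeform_pos_nonzero[of x] qvar_nonzero
  by (auto simp: qdeform_rat_def field_simps divide_less_0_iff)

lemma qdeform_rat_add_one: "qdeform_rat (x + 1) = qvar * qdeform_rat x + 1"
proof -
  consider "0 < x" | "x = 0" | "x = -1" | "-1 < x \<and> x < 0" | "x < -1" by linarith
  then show ?thesis
  proof cases
    case 1
    then show ?thesis by (simp add: qdeform_rat_def qdeform_pos_shift)
  next
    case 2
    then show ?thesis by (simp add: qdeform_rat_def qdeform_pos_one)
  next
    case 3
    then show ?thesis using qvar_nonzero by (simp add: qdeform_rat_def qdeform_pos_one)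
  next
    case 4
    define u where "u = - 1 / x - 1"
    have u: "0 < u" "x + 1 = u / (1 + u)" "- 1 / x = u + 1"
      using 4 by (auto simp: u_def field_simps)
    have L: "qdeform_rat (x + 1) = qvar * qdeform_pos u / (1 + qvar * qdeform_pos u)"
      using 4 u by (simp add: qdeform_rat_def qdeform_pos_coshift)
    have R: "qdeform_rat x = - 1 / (qvar * (qvar * qdeform_pos u + 1))"
      using 4 u by (simp add: qdeform_rat_def qdeform_pos_shift)
    have R': "qvar * qdeform_rat x = - 1 / (1 + qvar * qdeform_pos u)"
      using qvar_nonzero by (simp add: R add.commute[of "qvar * qdeform_pos u"])
    show ?thesis
      unfolding L R' using one_plus_qvar_qdeform_pos_nonzero[OF u(1)] by (simp add: field_simps)
  next
    case 5
    define w where "w = - 1 / (x + 1)"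
    have w: "0 < w" "- 1 / x = w / (1 + w)"
      using 5 by (auto simp: w_def field_simps)
    have L: "qdeform_rat (x + 1) = - 1 / (qvar * qdeform_pos w)"
      using 5 by (simp add: qdeform_rat_def w_def)
    have R: "qdeform_rat x = - 1 / (qvar * (qvar * qdeform_pos w / (1 + qvar * qdeform_pos w)))"
      using 5 w by (simp add: qdeform_rat_def qdeform_pos_coshift)
    show ?thesis
      unfolding L R using qvar_nonzero one_plus_qvar_qdeform_pos_nonzero[OF w(1)] qdeform_pos_nonzero[OF w(1)]
      by (simp add: field_simps)
  qed
qed

lemma is_qdeformation_map_option_qdeform_rat: "is_qdeformation (map_option qdeform_rat)"
  unfolding is_qdeformation_def
proof (intro conjI allI)
  show "map_option qdeform_rat (Some 0) = Some 0"
    by (simp add: qdeform_rat_eq_0_iff)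
  show "map_option qdeform_rat (shift1 v) = qshift1 (map_option qdeform_rat v)" for v
    by (cases v) (simp_all add: shift1_def qshift1_def qdeform_rat_add_one)
  show "map_option qdeform_rat (neginv v) = qneginv (map_option qdeform_rat v)" for v
  proof (cases v)
    case (Some x)
    then show ?thesis
      using qdeform_rat_neginv[of x] by (simp add: neginv_def qneginv_def qdeform_rat_eq_0_iff)
  qed (simp add: neginv_def qneginv_def qdeform_rat_eq_0_iff)
qed

lemma is_qdeformation_unique:
  assumes f: "is_qdeformation f" and g: "is_qdeformation g"
  shows "f = g"
proof
  note f_eqs = f[unfolded is_qdeformation_def] and g_eqs = g[unfolded is_qdeformation_def]
  have nat_div: "f (Some (of_nat m / of_nat n)) = g (Some (of_nat m / of_nat n))"
    if "0 < m" "0 < n" for m n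
    using that
  proof (induction m n rule: positive_pair_induct)
    case (diagonal m)
    then have "Some (of_nat m / of_nat m :: rat) = shift1 (Some 0)"
      by (simp add: shift1_def)
    then show ?case using f_eqs g_eqs by metis
  next
    case (add_left m n)
    then have "Some (of_nat (m + n) / of_nat n :: rat) = shift1 (Some (of_nat m / of_nat n))"
      by (simp add: shift1_def field_simps)
    then show ?case using add_left.IH f_eqs g_eqs by metis
  next
    case (add_right m n)
    then have "Some (of_nat m / of_nat (m + n) :: rat) = shift1 (neginv (shift1 (Some (of_nat m / of_nat n))))"
      by (simp add: shift1_def neginv_def field_simps)
    then show ?case using add_right.IH f_eqs g_eqs by metis
  qed
  have pos: "f (Some x) = g (Some x)" if "0 < x" for x
    using positive_rat_cases[OF that] nat_div by metis
  fix v
  show "f v = g v"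
  proof (cases v)
    case None
    then have "v = neginv (Some 0)" by (simp add: neginv_def)
    then show ?thesis using f_eqs g_eqs by metis
  next
    case (Some x)
    consider "0 < x" | "x = 0" | "x < 0" by linarith
    then show ?thesis
    proof cases
      case 3
      then have "v = neginv (Some (- 1 / x))" "0 < - 1 / x"
        using Some by (simp_all add: neginv_def divide_less_0_iff)
      then show ?thesis using f_eqs g_eqs pos by metis
    qed (use Some pos f_eqs g_eqs in auto)
  qed
qed

lemma qdeform_eq: "qdeform = map_option qdeform_rat"
  unfolding qdeform_def
  using is_qdeformation_map_option_qdeform_rat is_qdeformation_unique by blast

lemma coprime_crossmult_eq:
  fixes a b c d :: "'a::semiring_gcd"
  assumes "coprime a b" "coprime c d" "a * d = c * b"
    and "normalize a = a" "normalize b = b" "normalize c = c" "normalize d = d"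
  shows "a = c \<and> b = d"
proof
  have "a dvd c * b" "d dvd c * b"
    unfolding assms(3)[symmetric] by simp_all
  moreover have "c dvd a * d" "b dvd a * d"
    unfolding assms(3) by simp_all
  ultimately have "a dvd c" "d dvd b" "c dvd a" "b dvd d"
    using assms(1,2) by (simp_all add: coprime_dvd_mult_left_iff coprime_dvd_mult_right_iff coprime_commute)
  then show "a = c" "b = d"
    using assms(4-7) by (simp_all add: associated_eqI)
qed

lemma normalize_int_poly: "0 < lead_coeff p \<Longrightarrow> normalize (p :: int poly) = p"
  by (simp add: normalize_poly_def one_pCons[symmetric])

lemma qnumden_of_nat:
  assumes "coprime m n" "0 < m" "0 < n"
  shows "qnumden (of_nat m / of_nat n) = qnumden_nat m n"
proof -
  obtain N D where ND: "qnumden_nat m n = (N, D)" by fastforce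
  have lead: "0 < lead_coeff N" "0 < lead_coeff D"
    using qnumden_nat_coeffs[OF assms(2,3) ND] by simp_all
  have "coprime N D"
    using coprime_qnumden_nat[OF assms(2,3)] by (simp add: ND)
  have qdeform: "qdeform (Some (of_nat m / of_nat n)) = Some (Fract N D)"
    using assms by (simp add: qdeform_eq qdeform_rat_def qdeform_pos_of_nat ND)
  have unique: "(N', D') = (N, D)"
    if "coprime N' D'" "0 < lead_coeff N'" "0 < lead_coeff D'"
      "qdeform (Some (of_nat m / of_nat n)) = Some (Fract N' D')" for N' D'
  proof -
    have "D \<noteq> 0" "D' \<noteq> 0"
      using that(3) lead(2) by auto
    then have "N' * D = N * D'"
      using that(4) qdeform by (simp add: eq_fract)
    then show ?thesis
      using coprime_crossmult_eq[of N' D' N D] that(1-3) lead \<open>coprime N D\<close>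
        normalize_int_poly[of N] normalize_int_poly[of D] normalize_int_poly[of N'] normalize_int_poly[of D']
      by simp
  qed
  show ?thesis
    unfolding qnumden_def ND
    by (rule the_equality) (use lead \<open>coprime N D\<close> qdeform unique in auto)
qed

theorem proposition2:
  fixes m n :: nat
  assumes "coprime m n" and "1 \<le> n" and "n < m"
  defines "x \<equiv> (of_nat m / of_nat n :: rat)"
  shows "self_reciprocal (qA x) \<and> self_reciprocal (qB x)
       \<and> monic_both (qA x) \<and> monic_both (qB x) \<and> monic_both (qC x)
       \<and> positive_coeffs (qA x) \<and> positive_coeffs (qB x) \<and> positive_coeffs (qC x)"
proof -
  define d where "d = m - n"
  have "0 < d" "0 < n" "m = d + n" "coprime d n"
    using assms(1-3) by (simp_all add: d_def coprime_iff_gcd_eq_1 gcd_diff1_nat)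
  obtain N D N' D' where p: "qnumden_nat d n = (N, D)" and p': "qnumden_nat n d = (N', D')"
    by fastforce
  obtain k where k: "dual_pairs k (N, D) (N', D')"
    using dual_pairs_qnumden_nat[OF \<open>0 < d\<close> \<open>0 < n\<close>] by (auto simp: p p')
  note K = dual_pairs_shift[OF k, unfolded shift_nd.simps coshift_nd.simps]
  have "qnumden x = (pCons 0 N + D, D)"
    using qnumden_of_nat[OF assms(1)] qnumden_nat_add_left[OF \<open>0 < d\<close> \<open>0 < n\<close>] \<open>0 < n\<close>
    by (simp add: x_def \<open>m = d + n\<close> p)
  moreover have "qnumden (1 / x) = (pCons 0 N', D' + pCons 0 N')"
    using qnumden_of_nat[of n m] qnumden_nat_add_right[OF \<open>0 < n\<close> \<open>0 < d\<close>] assms(1) \<open>0 < n\<close>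
    by (simp add: x_def \<open>m = d + n\<close> p' coprime_commute add.commute)
  ultimately have "qA x = pCons 0 ((pCons 0 N + D) * pCons 0 N') + D * (D' + pCons 0 N')"
    and "qB x = (pCons 0 N + D) * (D' + pCons 0 N') - D * pCons 0 N'"
    and "qC x = pCons 0 ((pCons 0 N + D) * (pCons 0 N + D)) + D * D"
    by (simp_all add: qA_def qB_def qC_def qN_def qD_def power2_eq_square)
  then show ?thesis
    using reciprocal_fixed_props[OF dual_pairs_qA[OF K]]
      reciprocal_fixed_props[OF dual_pairs_qB_reciprocal[OF K] dual_pairs_qB_coeffs[OF k]]
      dual_pairs_qC[OF K]
    by simp
qed

end
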